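(* Consider binary operation $\wedge$ on $\{0,1\}$ defined by $1\wedge1=1\wedge0=0\wedge0=1$ and $0\wedge1=0$. For $n\ge0$, the number of walks $0=y_0,y_1,\dots,y_n=1$ with steps $y_i-y_{i-1}\in\{-2,-1,1,2\}$ and $y_i\ge0$ for all $i$ equals the number of complete bracketings (full binary parenthesizations) of the word $0\wedge0\wedge\cdots\wedge0$ with $n+2$ zeroes whose value is $0$. *)

theory Defs
  imports Main
begin

definition wedge :: "nat \<Rightarrow> nat \<Rightarrow> nat" where
  "wedge x y = (if x = 0 \<and> y = 1 then 0 else 1)"

text \<open>Complete bracketings of a word x^x^...^x are full binary trees;
  the leaves are the letters, read left to right.\<close>
datatype bracketing = Leaf | Node bracketing bracketing

fun leaves :: "bracketing \<Rightarrow> nat" where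
  "leaves Leaf = 1"
| "leaves (Node l r) = leaves l + leaves r"

fun eval_zeros :: "bracketing \<Rightarrow> nat" where
  "eval_zeros Leaf = 0"
| "eval_zeros (Node l r) = wedge (eval_zeros l) (eval_zeros r)"

definition walks :: "nat \<Rightarrow> int list set" where
  "walks n = {ys. length ys = n + 1 \<and> ys ! 0 = 0 \<and> ys ! n = 1 \<and>
      (\<forall>i\<in>{1..n}. ys ! i - ys ! (i - 1) \<in> {-2, -1, 1, 2}) \<and>
      (\<forall>i\<le>n. ys ! i \<ge> 0)}"

end

theory Submission
  imports Defs "HOL-Computational_Algebra.Formal_Power_Series"
begin

text \<open>
  Let \<open>E\<close> and \<open>F\<close> be the generating functions of nonnegative walks from 0 to 0 and
  from 0 to 1. Cutting a walk at its first visit to level 0 yields \<open>F = x E (E + F)\<close> and a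
  polynomial equation for \<open>E\<close>; eliminating \<open>F\<close>, the series \<open>z = x E\<close> satisfies
  \<open>z (1 - z)\<^sup>2 = x q\<^sup>2\<close> with \<open>q = z\<^sup>2 - z + 1\<close>.
  On the other side, the series \<open>C\<close> of all bracketings and \<open>A\<close> of those of value 0
  satisfy \<open>C = x + C\<^sup>2\<close> and \<open>A = x + A (C - A)\<close>, because a product has value 0
  exactly when it is \<open>0 \<and> 1\<close>. Both are solved in terms of \<open>z\<close>: \<open>C = z / q\<close> and
  \<open>A = z (1 - z) / q = x + x\<^sup>2 F\<close>. As the fixed point equation for \<open>A\<close> has a unique
  solution without constant term, comparing coefficients of \<open>x\<^sup>n\<^sup>+\<^sup>2\<close> gives the theorem.
\<close>

unbundle fps_syntax

section \<open>Nonnegative walks with steps \<open>\<plusminus>1, \<plusminus>2\<close>\<close>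

fun walk_count :: "nat \<Rightarrow> int \<Rightarrow> int \<Rightarrow> nat" where
  "walk_count 0 h j = (if h = j \<and> 0 \<le> h then 1 else 0)"
| "walk_count (Suc n) h j = (if h < 0 then 0 else
     walk_count n (h - 2) j + walk_count n (h - 1) j +
     walk_count n (h + 1) j + walk_count n (h + 2) j)"

lemma walk_count_start_neg: "h < 0 \<Longrightarrow> walk_count n h j = 0"
  by (cases n) auto

lemma walk_count_end_neg: "j < 0 \<Longrightarrow> walk_count n h j = 0"
  by (induction n arbitrary: h) auto

lemma walk_count_Suc_right:
  "walk_count (Suc n) h j = (if j < 0 then 0 else
     walk_count n h (j - 2) + walk_count n h (j - 1) +
     walk_count n h (j + 1) + walk_count n h (j + 2))"
proof (induction n arbitrary: h)
  case (Suc n)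
  show ?case
    by (simp only: walk_count.simps(2)[of "Suc n" h] Suc.IH) auto
qed auto

lemma walk_count_sym: "walk_count n h j = walk_count n j h"
proof (induction n arbitrary: h j)
  case (Suc n)
  show ?case
    by (subst walk_count_Suc_right) (simp add: Suc.IH)
qed auto

definition walks_between :: "nat \<Rightarrow> int \<Rightarrow> int \<Rightarrow> int list set" where
  "walks_between n h j = {ys. length ys = n + 1 \<and> ys ! 0 = h \<and> ys ! n = j \<and>
      (\<forall>i\<in>{1..n}. ys ! i - ys ! (i - 1) \<in> {-2, -1, 1, 2}) \<and>
      (\<forall>i\<le>n. ys ! i \<ge> 0)}"

lemma walks_eq_walks_between: "walks n = walks_between n 0 1"
  by (simp add: walks_def walks_between_def)

lemma walks_between_0: "walks_between 0 h j = (if h = j \<and> 0 \<le> h then {[h]} else {})"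
  by (auto simp: walks_between_def length_Suc_conv)

lemma atLeast1_atMost_Suc_eq_insert_1: "{1..Suc n} = insert 1 (Suc ` {1..n})"
  unfolding image_Suc_atLeastAtMost by (rule atLeastAtMost_insertL[symmetric]) simp

lemma Cons_in_walks_between:
  "x # ys \<in> walks_between (Suc n) h j \<longleftrightarrow>
     x = h \<and> 0 \<le> h \<and> ys \<in> walks_between n (ys ! 0) j \<and> ys ! 0 - h \<in> {-2, -1, 1, 2}"
proof -
  have steps: "(\<forall>i\<in>{1..Suc n}. (x # ys) ! i - (x # ys) ! (i - 1) \<in> S) \<longleftrightarrow>
      ys ! 0 - x \<in> S \<and> (\<forall>i\<in>{1..n}. ys ! i - ys ! (i - 1) \<in> S)" for S
    unfolding atLeast1_atMost_Suc_eq_insert_1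
    by (simp del: image_Suc_atLeastAtMost add: nth_Cons_pos)
  have nonneg: "(\<forall>i\<le>Suc n. (x # ys) ! i \<ge> 0) \<longleftrightarrow> 0 \<le> x \<and> (\<forall>i\<le>n. ys ! i \<ge> 0)"
    using All_less_Suc2[of "Suc n" "\<lambda>i. 0 \<le> (x # ys) ! i"]
    by (simp only: less_Suc_eq_le nth_Cons_0 nth_Cons_Suc)
  show ?thesis
    unfolding walks_between_def mem_Collect_eq steps nonneg length_Cons nth_Cons_0 nth_Cons_Suc
    by auto
qed

lemma walks_between_nth_0: "ys \<in> walks_between n h j \<Longrightarrow> ys ! 0 = h"
  by (simp add: walks_between_def)

lemma walks_between_Suc:
  "walks_between (Suc n) h j = (if h < 0 then {} else (#) h `
     (walks_between n (h - 2) j \<union> walks_between n (h - 1) j \<union>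
      walks_between n (h + 1) j \<union> walks_between n (h + 2) j))"
  (is "?L = (if h < 0 then {} else (#) h ` ?U)")
proof (rule set_eqI)
  fix zs
  show "zs \<in> ?L \<longleftrightarrow> zs \<in> (if h < 0 then {} else (#) h ` ?U)"
  proof (cases zs)
    case Nil
    then show ?thesis by (auto simp: walks_between_def)
  next
    case (Cons x ys)
    have "ys \<in> walks_between n (ys ! 0) j \<and> ys ! 0 - h \<in> {-2, -1, 1, 2} \<longleftrightarrow> ys \<in> ?U"
    proof
      assume ys: "ys \<in> walks_between n (ys ! 0) j \<and> ys ! 0 - h \<in> {-2, -1, 1, 2}"
      then have "ys ! 0 = h - 2 \<or> ys ! 0 = h - 1 \<or> ys ! 0 = h + 1 \<or> ys ! 0 = h + 2"
        by auto
      then show "ys \<in> ?U"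
        using ys by (elim disjE) simp_all
    next
      assume "ys \<in> ?U"
      then obtain a where "a \<in> {h - 2, h - 1, h + 1, h + 2}" and ys: "ys \<in> walks_between n a j"
        by blast
      moreover have "ys ! 0 = a"
        using ys by (rule walks_between_nth_0)
      ultimately show "ys \<in> walks_between n (ys ! 0) j \<and> ys ! 0 - h \<in> {-2, -1, 1, 2}"
        by auto
    qed
    moreover have "x # ys \<in> (#) h ` ?U \<longleftrightarrow> x = h \<and> ys \<in> ?U"
      by blast
    ultimately show ?thesis
      unfolding Cons Cons_in_walks_between by auto
  qed
qed

lemma finite_card_walks_between:
  "finite (walks_between n h j) \<and> card (walks_between n h j) = walk_count n h j"
proof (induction n arbitrary: h)
  case 0
  then show ?case by (simp add: walks_between_0)
next
  case (Suc n)
  have disj: "a \<noteq> b \<Longrightarrow> walks_between n a j \<inter> walks_between n b j = {}" for a b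
    by (auto simp: walks_between_def)
  let ?U = "walks_between n (h - 2) j \<union> walks_between n (h - 1) j \<union>
      walks_between n (h + 1) j \<union> walks_between n (h + 2) j"
  have "finite ?U"
    using Suc.IH by simp
  moreover have "card ?U = walk_count n (h - 2) j + walk_count n (h - 1) j +
      walk_count n (h + 1) j + walk_count n (h + 2) j"
    using Suc.IH by (simp add: card_Un_disjoint disj Int_Un_distrib2 Int_Un_distrib)
  moreover have "card ((#) h ` ?U) = card ?U"
    by (rule card_image) simp
  ultimately show ?case
    by (simp add: walks_between_Suc)
qed

text \<open>A walk from \<open>h \<ge> 1\<close> either stays at height \<open>\<ge> 1\<close>, i.e.\ it is a shifted walk from
  \<open>h - 1\<close> to \<open>j - 1\<close>, or it first reaches 0 at step \<open>k + 1\<close>, coming from height 1 or 2.\<close>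

lemma walk_count_first_passage:
  assumes "1 \<le> h"
  shows "walk_count n h j = walk_count n (h - 1) (j - 1) +
    (\<Sum>k<n. (walk_count k (h - 1) 0 + walk_count k (h - 1) 1) * walk_count (n - 1 - k) 0 j)"
  using assms
proof (induction n arbitrary: h)
  case 0
  then show ?case by simp
next
  case (Suc n)
  define T where
    "T x = (\<Sum>k<n. (walk_count k x 0 + walk_count k x 1) * walk_count (n - 1 - k) 0 j)" for x
  have IH: "1 \<le> x \<Longrightarrow> walk_count n x j = walk_count n (x - 1) (j - 1) + T (x - 1)" for x
    using Suc.IH unfolding T_def by blast
  have T_neg: "x < 0 \<Longrightarrow> T x = 0" for x
    by (simp add: T_def walk_count_start_neg)
  let ?c = "\<lambda>k. walk_count k (h - 1) 0 + walk_count k (h - 1) 1"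
  have "(\<Sum>k<Suc n. ?c k * walk_count (Suc n - 1 - k) 0 j) =
     ?c 0 * walk_count n 0 j + (\<Sum>k<n. ?c (Suc k) * walk_count (n - 1 - k) 0 j)"
    by (subst sum.lessThan_Suc_shift) (simp del: walk_count.simps)
  also have "(\<Sum>k<n. ?c (Suc k) * walk_count (n - 1 - k) 0 j) =
      T (h - 3) + T (h - 2) + T h + T (h + 1)"
    using Suc.prems unfolding T_def by (simp add: sum.distrib[symmetric] algebra_simps)
  finally have sum_Suc: "(\<Sum>k<Suc n. ?c k * walk_count (Suc n - 1 - k) 0 j) =
     (if h = 1 \<or> h = 2 then walk_count n 0 j else 0) + T (h - 3) + T (h - 2) + T h + T (h + 1)"
    using Suc.prems by auto
  have shifted: "walk_count (Suc n) (h - 1) (j - 1) = walk_count n (h - 3) (j - 1) +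
      walk_count n (h - 2) (j - 1) + walk_count n h (j - 1) + walk_count n (h + 1) (j - 1)"
    using Suc.prems by (simp add: algebra_simps)
  have unshifted: "walk_count (Suc n) h j = walk_count n (h - 2) j + walk_count n (h - 1) j +
      walk_count n (h + 1) j + walk_count n (h + 2) j"
    using Suc.prems by simp
  have "walk_count n (h + 1) j = walk_count n h (j - 1) + T h"
    and "walk_count n (h + 2) j = walk_count n (h + 1) (j - 1) + T (h + 1)"
    using IH[of "h + 1"] IH[of "h + 2"] Suc.prems by (simp_all add: algebra_simps)
  moreover have "walk_count n (h - 1) j =
      (if h = 1 then walk_count n 0 j else walk_count n (h - 2) (j - 1) + T (h - 2))"
    and "walk_count n (h - 2) j = (if h = 1 then 0 else if h = 2 then walk_count n 0 j
      else walk_count n (h - 3) (j - 1) + T (h - 3))"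
    using IH[of "h - 1"] IH[of "h - 2"] Suc.prems by (auto simp: walk_count_start_neg)
  ultimately show ?case
    unfolding unshifted shifted sum_Suc using Suc.prems T_neg[of "-1"] T_neg[of "-2"]
    by (auto simp: walk_count_start_neg)
qed

definition walk_gf :: "int \<Rightarrow> int \<Rightarrow> int fps" where
  "walk_gf h j = Abs_fps (\<lambda>n. int (walk_count n h j))"

lemma walk_gf_nth [simp]: "walk_gf h j $ n = int (walk_count n h j)"
  by (simp add: walk_gf_def)

lemma walk_gf_end_neg: "j < 0 \<Longrightarrow> walk_gf h j = 0"
  by (rule fps_ext) (simp add: walk_count_end_neg)

lemma walk_gf_sym: "walk_gf h j = walk_gf j h"
  by (rule fps_ext) (simp add: walk_count_sym[of _ h j])

lemma walk_gf_first_passage: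
  assumes "1 \<le> h"
  shows "walk_gf h j = walk_gf (h - 1) (j - 1) +
    fps_X * ((walk_gf (h - 1) 0 + walk_gf (h - 1) 1) * walk_gf 0 j)"
proof (rule fps_ext)
  fix n
  show "walk_gf h j $ n = (walk_gf (h - 1) (j - 1) +
      fps_X * ((walk_gf (h - 1) 0 + walk_gf (h - 1) 1) * walk_gf 0 j)) $ n"
  proof (cases n)
    case 0
    then show ?thesis using assms by simp
  next
    case (Suc m)
    let ?c = "\<lambda>k. walk_count k (h - 1) 0 + walk_count k (h - 1) 1"
    have "(\<Sum>k<n. ?c k * walk_count (n - 1 - k) 0 j) = (\<Sum>k=0..m. ?c k * walk_count (m - k) 0 j)"
      using Suc by (simp add: atLeast0AtMost lessThan_Suc_atMost)
    then have "walk_gf h j $ n =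
        walk_gf (h - 1) (j - 1) $ n + (\<Sum>k=0..m. int (?c k * walk_count (m - k) 0 j))"
      using walk_count_first_passage[OF assms, of n j] by (simp add: of_nat_sum)
    also have "(\<Sum>k=0..m. int (?c k * walk_count (m - k) 0 j)) =
        ((walk_gf (h - 1) 0 + walk_gf (h - 1) 1) * walk_gf 0 j) $ m"
      by (simp add: fps_mult_nth)
    also have "\<dots> = (fps_X * ((walk_gf (h - 1) 0 + walk_gf (h - 1) 1) * walk_gf 0 j)) $ n"
      using Suc by simp
    finally show ?thesis by simp
  qed
qed

lemma walk_gf_0_0: "walk_gf 0 0 = 1 + fps_X * (walk_gf 1 0 + walk_gf 2 0)"
proof (rule fps_ext)
  fix n
  show "walk_gf 0 0 $ n = (1 + fps_X * (walk_gf 1 0 + walk_gf 2 0)) $ n"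
    by (cases n) (simp_all add: walk_count_start_neg)
qed

lemma walk_gf_equations:
  defines "E \<equiv> walk_gf 0 0" and "F \<equiv> walk_gf 0 1"
  shows "F = fps_X * (E + F) * E"
    and "E = 1 + fps_X * F + fps_X ^ 2 * F * E + fps_X ^ 2 * E ^ 2 + fps_X ^ 3 * (E + F) * F * E"
proof -
  have F_sym: "walk_gf 1 0 = F"
    unfolding F_def by (rule walk_gf_sym)
  show "F = fps_X * (E + F) * E"
    using walk_gf_first_passage[of 1 0]
    by (simp add: walk_gf_end_neg F_sym E_def F_def mult.assoc)
  have "walk_gf 1 1 = E + fps_X * ((E + F) * F)"
    using walk_gf_first_passage[of 1 1] by (simp add: E_def F_def)
  then have "walk_gf 2 0 = fps_X * ((F + E + fps_X * ((E + F) * F)) * E)"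
    using walk_gf_first_passage[of 2 0] by (simp add: walk_gf_end_neg E_def F_sym)
  then have "E = 1 + fps_X * (F + fps_X * ((F + E + fps_X * ((E + F) * F)) * E))"
    using walk_gf_0_0 F_sym by (simp add: E_def)
  also have "\<dots> =
      1 + fps_X * F + fps_X ^ 2 * F * E + fps_X ^ 2 * E ^ 2 + fps_X ^ 3 * (E + F) * F * E"
    by (simp add: algebra_simps power2_eq_square power3_eq_cube)
  finally show
    "E = 1 + fps_X * F + fps_X ^ 2 * F * E + fps_X ^ 2 * E ^ 2 + fps_X ^ 3 * (E + F) * F * E" .
qed

section \<open>Bracketings by value\<close>

lemma leaves_ge_1: "leaves t \<ge> 1"
  by (induction t) auto

lemma eval_zeros_cases: "eval_zeros t = 0 \<or> eval_zeros t = 1"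
  by (cases t) (auto simp: wedge_def)

lemma finite_leaves_eq: "finite {t. leaves t = k}"
proof (induction k rule: less_induct)
  case (less k)
  let ?S = "\<Union>i\<in>{1..<k}. {t. leaves t = i} \<times> {t. leaves t = k - i}"
  have "{t. leaves t = k} \<subseteq> {Leaf} \<union> case_prod Node ` ?S"
  proof
    fix t assume t: "t \<in> {t. leaves t = k}"
    show "t \<in> {Leaf} \<union> case_prod Node ` ?S"
    proof (cases t)
      case (Node l r)
      with t have "leaves l + leaves r = k" by simp
      moreover have "leaves l \<ge> 1" "leaves r \<ge> 1" by (rule leaves_ge_1)+
      ultimately show ?thesis using Node by (auto intro!: image_eqI[of _ _ "(l, r)"])
    qed simp
  qed
  moreover have "finite ?S"
    using less by auto
  ultimately show ?case
    by (meson finite.emptyI finite.insertI finite_UnI finite_imageI finite_subset)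
qed

definition bracketing_gf :: "(bracketing \<Rightarrow> bool) \<Rightarrow> int fps" where
  "bracketing_gf P = Abs_fps (\<lambda>k. int (card {t. leaves t = k \<and> P t}))"

lemma bracketing_gf_nth_0: "bracketing_gf P $ 0 = 0"
proof -
  have empty: "{t. leaves t = 0 \<and> P t} = {}"
    using leaves_ge_1 by (metis (mono_tags, lifting) Collect_empty_eq not_one_le_zero)
  show ?thesis
    unfolding bracketing_gf_def fps_nth_Abs_fps empty by simp
qed

lemma bracketing_gf_Leaf: "bracketing_gf (\<lambda>t. t = Leaf) = fps_X"
proof (rule fps_ext)
  fix k
  have "{t. leaves t = k \<and> t = Leaf} = (if k = 1 then {Leaf} else {})"
    by auto
  then show "bracketing_gf (\<lambda>t. t = Leaf) $ k = fps_X $ k"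
    by (simp add: bracketing_gf_def)
qed

lemma bracketing_gf_disj:
  assumes "\<And>t. \<not> (P t \<and> Q t)"
  shows "bracketing_gf (\<lambda>t. P t \<or> Q t) = bracketing_gf P + bracketing_gf Q"
proof (rule fps_ext)
  fix k
  have fin: "finite {t. leaves t = k \<and> R t}" for R
    by (rule finite_subset[OF _ finite_leaves_eq[of k]]) blast
  have "{t. leaves t = k \<and> (P t \<or> Q t)} = {t. leaves t = k \<and> P t} \<union> {t. leaves t = k \<and> Q t}"
    by blast
  then show "bracketing_gf (\<lambda>t. P t \<or> Q t) $ k = (bracketing_gf P + bracketing_gf Q) $ k"
    using assms by (simp add: bracketing_gf_def card_Un_disjoint[OF fin fin] disjoint_iff)
qed

lemma card_Node_leaves_eq:
  "card {t. leaves t = k \<and> (\<exists>l r. t = Node l r \<and> P l \<and> Q r)} =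
   (\<Sum>i\<le>k. card {l. leaves l = i \<and> P l} * card {r. leaves r = k - i \<and> Q r})"
proof -
  let ?S = "\<lambda>i. {l. leaves l = i \<and> P l} \<times> {r. leaves r = k - i \<and> Q r}"
  have fin: "finite {t. leaves t = i \<and> R t}" for i R
    by (rule finite_subset[OF _ finite_leaves_eq[of i]]) blast
  have "{t. leaves t = k \<and> (\<exists>l r. t = Node l r \<and> P l \<and> Q r)} =
      case_prod Node ` (\<Union>i\<le>k. ?S i)"
  proof (rule set_eqI, rule iffI)
    fix t assume "t \<in> {t. leaves t = k \<and> (\<exists>l r. t = Node l r \<and> P l \<and> Q r)}"
    then obtain l r where "t = Node l r" "P l" "Q r" "leaves l + leaves r = k"
      by auto
    then show "t \<in> case_prod Node ` (\<Union>i\<le>k. ?S i)"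
      by (auto intro!: image_eqI[of _ _ "(l, r)"])
  qed auto
  moreover have "card (case_prod Node ` (\<Union>i\<le>k. ?S i)) = card (\<Union>i\<le>k. ?S i)"
    by (rule card_image) (auto simp: inj_on_def)
  moreover have "card (\<Union>i\<le>k. ?S i) = (\<Sum>i\<le>k. card (?S i))"
    by (rule card_UN_disjoint) (auto simp: fin)
  ultimately show ?thesis
    by (simp add: card_cartesian_product)
qed

lemma bracketing_gf_Node:
  "bracketing_gf (\<lambda>t. \<exists>l r. t = Node l r \<and> P l \<and> Q r) = bracketing_gf P * bracketing_gf Q"
  by (rule fps_ext)
    (simp add: bracketing_gf_def card_Node_leaves_eq fps_mult_nth atLeast0AtMost of_nat_sum)

lemma bracketing_gf_all: "bracketing_gf (\<lambda>_. True) = fps_X + bracketing_gf (\<lambda>_. True) ^ 2"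
proof -
  have "(\<lambda>_. True) = (\<lambda>t. t = Leaf \<or> (\<exists>l r. t = Node l r \<and> True \<and> True))"
    by (metis bracketing.exhaust)
  then have "bracketing_gf (\<lambda>_. True) =
      bracketing_gf (\<lambda>t. t = Leaf \<or> (\<exists>l r. t = Node l r \<and> True \<and> True))"
    by (rule arg_cong)
  also have "\<dots> = bracketing_gf (\<lambda>t. t = Leaf) +
      bracketing_gf (\<lambda>t. \<exists>l r. t = Node l r \<and> True \<and> True)"
    by (rule bracketing_gf_disj) simp
  finally show ?thesis
    by (simp only: bracketing_gf_Leaf bracketing_gf_Node power2_eq_square)
qed

lemma bracketing_gf_value_0:
  "bracketing_gf (\<lambda>t. eval_zeros t = 0) =
     fps_X + bracketing_gf (\<lambda>t. eval_zeros t = 0) * bracketing_gf (\<lambda>t. eval_zeros t = 1)"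
proof -
  have "(\<lambda>t. eval_zeros t = 0) =
      (\<lambda>t. t = Leaf \<or> (\<exists>l r. t = Node l r \<and> eval_zeros l = 0 \<and> eval_zeros r = 1))"
  proof
    fix t show "(eval_zeros t = 0) =
        (t = Leaf \<or> (\<exists>l r. t = Node l r \<and> eval_zeros l = 0 \<and> eval_zeros r = 1))"
      by (cases t) (auto simp: wedge_def)
  qed
  then have "bracketing_gf (\<lambda>t. eval_zeros t = 0) = bracketing_gf
      (\<lambda>t. t = Leaf \<or> (\<exists>l r. t = Node l r \<and> eval_zeros l = 0 \<and> eval_zeros r = 1))"
    by (rule arg_cong)
  also have "\<dots> = bracketing_gf (\<lambda>t. t = Leaf) +
      bracketing_gf (\<lambda>t. \<exists>l r. t = Node l r \<and> eval_zeros l = 0 \<and> eval_zeros r = 1)"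
    by (rule bracketing_gf_disj) simp
  finally show ?thesis
    by (simp only: bracketing_gf_Leaf bracketing_gf_Node)
qed

lemma bracketing_gf_all_eq_sum:
  "bracketing_gf (\<lambda>_. True) =
     bracketing_gf (\<lambda>t. eval_zeros t = 0) + bracketing_gf (\<lambda>t. eval_zeros t = 1)"
proof -
  have "(\<lambda>_. True) = (\<lambda>t. eval_zeros t = 0 \<or> eval_zeros t = 1)"
    using eval_zeros_cases by blast
  then have "bracketing_gf (\<lambda>_. True) =
      bracketing_gf (\<lambda>t. eval_zeros t = 0 \<or> eval_zeros t = 1)"
    by (rule arg_cong)
  also have "\<dots> = bracketing_gf (\<lambda>t. eval_zeros t = 0) + bracketing_gf (\<lambda>t. eval_zeros t = 1)"
    by (rule bracketing_gf_disj) auto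
  finally show ?thesis .
qed

section \<open>Power series identities\<close>

lemma quartic_of_walk_equations:
  fixes x E F :: "'a::comm_ring_1"
  assumes F: "F = x * (E + F) * E"
    and E: "E = 1 + x * F + x ^ 2 * F * E + x ^ 2 * E ^ 2 + x ^ 3 * (E + F) * F * E"
  shows "x * E * (1 - x * E) ^ 2 = x * ((x * E) ^ 2 - x * E + 1) ^ 2"
proof -
  \<comment> \<open>elimination certificate: the difference is a combination of the two equations\<close>
  have "x * E * (1 - x * E) ^ 2 - x * ((x * E) ^ 2 - x * E + 1) ^ 2 =
      x * (1 - x * E) ^ 2 *
        (E - (1 + x * F + x ^ 2 * F * E + x ^ 2 * E ^ 2 + x ^ 3 * (E + F) * F * E)) +
      (x ^ 2 + x ^ 4 * E * F - x ^ 5 * E ^ 2 * F) * (F - x * (E + F) * E)"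
    by (simp add: algebra_simps eval_nat_numeral)
  also have "\<dots> = 0"
  proof -
    have "F - x * (E + F) * E = 0"
      using F by (rule eq_iff_diff_eq_0[THEN iffD1])
    moreover have "E - (1 + x * F + x ^ 2 * F * E + x ^ 2 * E ^ 2 + x ^ 3 * (E + F) * F * E) = 0"
      using E by (rule eq_iff_diff_eq_0[THEN iffD1])
    ultimately show ?thesis by simp
  qed
  finally show ?thesis by simp
qed

lemma fps_mult_eq_0_const_nonzero:
  fixes a f :: "'a::idom fps"
  assumes "f $ 0 \<noteq> 0" and "a * f = 0"
  shows "a = 0"
  using assms by (metis fps_zero_nth mult_eq_0_iff)

lemma fps_catalan_parametrization:
  fixes C z :: "'a::idom fps"
  defines "q \<equiv> z ^ 2 - z + 1"
  assumes C: "C = fps_X + C ^ 2" and C0: "C $ 0 = 0" and z0: "z $ 0 = 0"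
    and quartic: "z * (1 - z) ^ 2 = fps_X * q ^ 2"
  shows "C * q = z"
proof -
  have "(C * q - z) * (q - C * q - z) =
      (C - (fps_X + C ^ 2)) * q ^ 2 - (z * (1 - z) ^ 2 - fps_X * q ^ 2)"
    by (simp add: q_def algebra_simps power2_eq_square)
  also have "\<dots> = 0"
    using C quartic by (simp only: eq_iff_diff_eq_0[symmetric] diff_self) simp
  finally have "C * q - z = 0"
    by (rule fps_mult_eq_0_const_nonzero[rotated])
      (simp add: C0 z0 q_def fps_mult_nth power2_eq_square)
  then show ?thesis
    by simp
qed

lemma fps_walk_fixpoint:
  fixes E F C :: "'a::idom fps"
  defines "z \<equiv> fps_X * E" and "q \<equiv> (fps_X * E) ^ 2 - fps_X * E + 1"
    and "A \<equiv> fps_X + fps_X ^ 2 * F"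
  assumes F: "F = fps_X * (E + F) * E"
    and quartic: "z * (1 - z) ^ 2 = fps_X * q ^ 2"
    and C: "C * q = z"
  shows "A = fps_X + A * (C - A)"
proof -
  have q_z: "q = z ^ 2 - z + 1"
    by (simp add: q_def z_def)
  have z0: "z $ 0 = 0" and q0: "q $ 0 = 1"
    by (simp_all add: z_def q_def power2_eq_square fps_mult_nth)
  have "A * (1 - z) - fps_X * q = fps_X ^ 2 * (F - fps_X * (E + F) * E)"
    by (simp add: A_def z_def q_def algebra_simps power2_eq_square)
  moreover have "F - fps_X * (E + F) * E = 0"
    using F by (rule eq_iff_diff_eq_0[THEN iffD1])
  ultimately have A_lin: "A * (1 - z) = fps_X * q"
    by simp
  have "(A * q - z * (1 - z)) * (1 - z) =
      q * (A * (1 - z) - fps_X * q) + (fps_X * q ^ 2 - z * (1 - z) ^ 2)"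
    by (simp add: algebra_simps power2_eq_square)
  also have "\<dots> = 0"
    using A_lin quartic by simp
  finally have "A * q - z * (1 - z) = 0"
    by (rule fps_mult_eq_0_const_nonzero[rotated]) (simp add: z0)
  then have A_quot: "A * q = z * (1 - z)"
    by simp
  \<comment> \<open>with \<open>A = z (1 - z) / q\<close> and \<open>C = z / q\<close> the equation reduces to \<open>q - z\<^sup>2 = 1 - z\<close>\<close>
  have "(A - (fps_X + A * (C - A))) * q ^ 2 =
      (A * q) * q - fps_X * q ^ 2 - (A * q) * (C * q - A * q)"
    by (simp add: algebra_simps power2_eq_square)
  also have "\<dots> = z * (1 - z) * q - fps_X * q ^ 2 - z * (1 - z) * (z - z * (1 - z))"
    using A_quot C by simp
  also have "\<dots> = z * (1 - z) ^ 2 - fps_X * q ^ 2"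
    by (simp add: q_z algebra_simps power2_eq_square)
  also have "\<dots> = 0"
    using quartic by simp
  finally have "A - (fps_X + A * (C - A)) = 0"
    by (rule fps_mult_eq_0_const_nonzero[rotated])
      (simp add: q0 fps_mult_nth power2_eq_square)
  then show ?thesis
    by (rule eq_iff_diff_eq_0[THEN iffD2])
qed

lemma fps_fixpoint_unique:
  fixes A A' C :: "'a::idom fps"
  assumes A: "A = fps_X + A * (C - A)" and A': "A' = fps_X + A' * (C - A')"
    and "A $ 0 = 0" and "A' $ 0 = 0" and "C $ 0 = 0"
  shows "A = A'"
proof -
  have "(A - A') * (1 - C + A + A') =
      (A - (fps_X + A * (C - A))) - (A' - (fps_X + A' * (C - A')))"
    by (simp add: algebra_simps)
  also have "\<dots> = 0"
    using A A' by (simp only: eq_iff_diff_eq_0[symmetric] diff_self)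
  finally have "A - A' = 0"
    by (rule fps_mult_eq_0_const_nonzero[rotated]) (simp add: assms(3-5))
  then show ?thesis
    by simp
qed

theorem proposition5p5:
  fixes n :: nat
  shows "card (walks n) = card {t. leaves t = n + 2 \<and> eval_zeros t = 0}"
proof -
  define E F where "E = walk_gf 0 0" and "F = walk_gf 0 1"
  define C A where "C = bracketing_gf (\<lambda>_. True)" and "A = bracketing_gf (\<lambda>t. eval_zeros t = 0)"
  define W where "W = fps_X + fps_X ^ 2 * F"
  have F_eq: "F = fps_X * (E + F) * E"
    and quartic: "fps_X * E * (1 - fps_X * E) ^ 2 = fps_X * ((fps_X * E) ^ 2 - fps_X * E + 1) ^ 2"
    using walk_gf_equations quartic_of_walk_equations unfolding E_def F_def by blast+
  have "C * ((fps_X * E) ^ 2 - fps_X * E + 1) = fps_X * E"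
    using fps_catalan_parametrization[OF _ _ _ quartic] bracketing_gf_all bracketing_gf_nth_0
    unfolding C_def by simp
  then have W_fix: "W = fps_X + W * (C - W)"
    using fps_walk_fixpoint[OF F_eq quartic] unfolding W_def by blast
  have A_fix: "A = fps_X + A * (C - A)"
    using bracketing_gf_value_0 bracketing_gf_all_eq_sum unfolding A_def C_def by simp
  have "A = W"
    using fps_fixpoint_unique[OF A_fix W_fix] bracketing_gf_nth_0
    by (simp add: A_def C_def W_def)
  then have "A $ (n + 2) = F $ n"
    by (simp add: W_def fps_X_power_mult_nth)
  then show ?thesis
    by (simp add: A_def F_def bracketing_gf_def walks_eq_walks_between finite_card_walks_between)
qed

end
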